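(* Let $S\subseteq\{0,1\}^n$ and $f:S\to\{0,1\}$. If $f$ is total (i.e. $S=\{0,1\}^n$) then $\mathsf{maxPI}(f)\le\sqrt{C_0(f)C_1(f)}$. If $f$ is partial then $\mathsf{maxPI}(f)\le\min\{\sqrt{nC_0(f)},\sqrt{nC_1(f)}\}$.
   Context: A certificate for $f$ on $x\in S$ is a set $I\subseteq[n]$ such that every $y\in S$ with $y_i=x_i$ for all $i\in I$ satisfies $f(y)=f(x)$. $C_0(f)$ (resp. $C_1(f)$) is the maximum over $x\in f^{-1}(0)$ (resp. $f^{-1}(1)$) of the minimum size of a certificate for $x$. With $p=\{p_x:x\in S\}$ ranging over families of probability distributions on $[n]$, $$\mathsf{maxPI}(f)=\min_{p}\ \max_{x,y\in S:\ f(x)\neq f(y)} \frac{1}{\max_{i:\,x_i\neq y_i}\sqrt{p_x(i)p_y(i)}}.$$ *)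

theory Defs
  imports "HOL-Analysis.Analysis"
begin

text \<open>Bit strings of length n are functions nat => bool that vanish (are False)
  outside the index set [n] = {0..<n}; bit 1 is True, bit 0 is False.\<close>

definition cube :: "nat \<Rightarrow> (nat \<Rightarrow> bool) set" where
  "cube n = {x. \<forall>i. n \<le> i \<longrightarrow> \<not> x i}"

definition is_certificate ::
  "nat \<Rightarrow> (nat \<Rightarrow> bool) set \<Rightarrow> ((nat \<Rightarrow> bool) \<Rightarrow> bool) \<Rightarrow> (nat \<Rightarrow> bool) \<Rightarrow> nat set \<Rightarrow> bool" where
  "is_certificate n S f x I \<longleftrightarrow>
     I \<subseteq> {..<n} \<and> (\<forall>y\<in>S. (\<forall>i\<in>I. y i = x i) \<longrightarrow> f y = f x)"

definition min_cert_size ::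
  "nat \<Rightarrow> (nat \<Rightarrow> bool) set \<Rightarrow> ((nat \<Rightarrow> bool) \<Rightarrow> bool) \<Rightarrow> (nat \<Rightarrow> bool) \<Rightarrow> nat" where
  "min_cert_size n S f x = Min (card ` {I. is_certificate n S f x I})"

definition Ccert ::
  "nat \<Rightarrow> (nat \<Rightarrow> bool) set \<Rightarrow> ((nat \<Rightarrow> bool) \<Rightarrow> bool) \<Rightarrow> bool \<Rightarrow> nat" where
  "Ccert n S f b =
     (if {x\<in>S. f x = b} = {} then 0
      else Max (min_cert_size n S f ` {x\<in>S. f x = b}))"

definition prob_family ::
  "nat \<Rightarrow> (nat \<Rightarrow> bool) set \<Rightarrow> ((nat \<Rightarrow> bool) \<Rightarrow> nat \<Rightarrow> real) \<Rightarrow> bool" where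
  "prob_family n S p \<longleftrightarrow>
     (\<forall>x\<in>S. (\<forall>i<n. 0 \<le> p x i) \<and> (\<Sum>i<n. p x i) = 1)"

definition pair_cost ::
  "nat \<Rightarrow> ((nat \<Rightarrow> bool) \<Rightarrow> nat \<Rightarrow> real) \<Rightarrow> (nat \<Rightarrow> bool) \<Rightarrow> (nat \<Rightarrow> bool) \<Rightarrow> ereal" where
  "pair_cost n p x y =
     (let m = Max ((\<lambda>i. sqrt (p x i * p y i)) ` {i. i < n \<and> x i \<noteq> y i})
      in if 0 < m then ereal (1 / m) else \<infinity>)"

definition maxPI ::
  "nat \<Rightarrow> (nat \<Rightarrow> bool) set \<Rightarrow> ((nat \<Rightarrow> bool) \<Rightarrow> bool) \<Rightarrow> ereal" where
  "maxPI n S f =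
     (INF p \<in> {p. prob_family n S p}.
        SUP xy \<in> {(x, y). x \<in> S \<and> y \<in> S \<and> f x \<noteq> f y}. pair_cost n p (fst xy) (snd xy))"

end

theory Submission
  imports Defs
begin

text \<open>Give each input x the uniform distribution on a minimum certificate of x. If
  f x \<noteq> f y, the certificate of x contains an index i with x i \<noteq> y i, so p_x(i) p_y(i) is
  at least 1/(n C_b) when the inputs outside f\<inverse>(b) get the uniform distribution on [n].
  For total f the index can be taken in both certificates, giving 1/(C_0 C_1): otherwise the
  hybrid input agreeing with x on the certificate of x and with y elsewhere would be certified
  to take both values.\<close>

definition min_certificate ::
  "nat \<Rightarrow> (nat \<Rightarrow> bool) set \<Rightarrow> ((nat \<Rightarrow> bool) \<Rightarrow> bool) \<Rightarrow> (nat \<Rightarrow> bool) \<Rightarrow> nat set" where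
  "min_certificate n S f x = (SOME I. is_certificate n S f x I \<and> card I = min_cert_size n S f x)"

lemma certificates_finite: "finite {I. is_certificate n S f x I}"
  by (rule finite_subset[of _ "Pow {..<n}"]) (auto simp: is_certificate_def)

lemma is_certificate_lessThan:
  assumes "S \<subseteq> cube n" "x \<in> S"
  shows "is_certificate n S f x {..<n}"
proof -
  have "y = x" if "y \<in> S" "\<forall>i<n. y i = x i" for y
  proof
    fix i show "y i = x i"
      using that assms unfolding cube_def by (cases "i < n") auto
  qed
  then show ?thesis unfolding is_certificate_def by auto
qed

lemma min_cert_size_le:
  assumes "S \<subseteq> cube n" "x \<in> S"
  shows "min_cert_size n S f x \<le> n"
proof -
  have "card {..<n} \<in> card ` {I. is_certificate n S f x I}"
    using is_certificate_lessThan[OF assms] by blast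
  then show ?thesis
    unfolding min_cert_size_def using certificates_finite by (metis Min_le card_lessThan finite_imageI)
qed

lemma min_certificate:
  assumes "S \<subseteq> cube n" "x \<in> S"
  shows "is_certificate n S f x (min_certificate n S f x)"
    and "card (min_certificate n S f x) = min_cert_size n S f x"
proof -
  let ?C = "{I. is_certificate n S f x I}"
  have "Min (card ` ?C) \<in> card ` ?C"
    using is_certificate_lessThan[OF assms] certificates_finite by (intro Min_in) auto
  then have "\<exists>I. is_certificate n S f x I \<and> card I = min_cert_size n S f x"
    unfolding min_cert_size_def by force
  then show "is_certificate n S f x (min_certificate n S f x)"
    and "card (min_certificate n S f x) = min_cert_size n S f x"
    unfolding min_certificate_def by (metis (mono_tags, lifting) someI_ex)+
qed

lemma min_cert_size_le_Ccert:
  assumes "S \<subseteq> cube n" "x \<in> S"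
  shows "min_cert_size n S f x \<le> Ccert n S f (f x)"
proof -
  have "finite (min_cert_size n S f ` {y\<in>S. f y = f x})"
    by (rule finite_subset[of _ "{..n}"]) (use min_cert_size_le[OF assms(1)] in auto)
  then show ?thesis unfolding Ccert_def using assms(2) by (auto intro!: Max_ge)
qed

lemma certificate_distinguishes:
  assumes "is_certificate n S f x I" "y \<in> S" "f y \<noteq> f x"
  shows "\<exists>i\<in>I. x i \<noteq> y i"
  using assms unfolding is_certificate_def by fastforce

lemma certificates_intersect:
  assumes "x \<in> cube n" "y \<in> cube n" "f x \<noteq> f y"
    and I: "is_certificate n (cube n) f x I" and J: "is_certificate n (cube n) f y J"
  shows "\<exists>i\<in>I \<inter> J. x i \<noteq> y i"
proof (rule ccontr)
  assume disjoint: "\<not> (\<exists>i\<in>I \<inter> J. x i \<noteq> y i)"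
  define z where "z i = (if i \<in> I then x i else y i)" for i
  have "z \<in> cube n"
    using assms(1,2) I unfolding z_def cube_def is_certificate_def by auto
  moreover have "\<forall>i\<in>I. z i = x i" and "\<forall>i\<in>J. z i = y i"
    using disjoint unfolding z_def by auto
  ultimately have "f z = f x" and "f z = f y"
    using I J unfolding is_certificate_def by blast+
  with assms(3) show False by simp
qed

text \<open>A minimum certificate is empty only if f is constant on S; replacing it by [n] then
  keeps the uniform distribution on it a probability distribution.\<close>

definition cert_support ::
  "nat \<Rightarrow> (nat \<Rightarrow> bool) set \<Rightarrow> ((nat \<Rightarrow> bool) \<Rightarrow> bool) \<Rightarrow> (nat \<Rightarrow> bool) \<Rightarrow> nat set" where
  "cert_support n S f x =
     (if min_certificate n S f x = {} then {..<n} else min_certificate n S f x)"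

lemma cert_support_subset:
  assumes "0 < n" "S \<subseteq> cube n" "x \<in> S"
  shows "cert_support n S f x \<subseteq> {..<n}" and "cert_support n S f x \<noteq> {}"
  using min_certificate(1)[OF assms(2,3), of f] assms(1)
  unfolding cert_support_def is_certificate_def by auto

lemma cert_support_eq_min_certificate:
  assumes "S \<subseteq> cube n" "x \<in> S" "y \<in> S" "f y \<noteq> f x"
  shows "cert_support n S f x = min_certificate n S f x"
  using certificate_distinguishes[OF min_certificate(1)[OF assms(1,2)] assms(3,4)]
  unfolding cert_support_def by auto

lemma card_cert_support_le_Ccert:
  assumes "S \<subseteq> cube n" "x \<in> S" "y \<in> S" "f y \<noteq> f x"
  shows "card (cert_support n S f x) \<le> Ccert n S f (f x)"
  using cert_support_eq_min_certificate[OF assms] min_certificate(2)[OF assms(1,2)]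
    min_cert_size_le_Ccert[OF assms(1,2)] by simp

definition uniform_dist :: "nat set \<Rightarrow> nat \<Rightarrow> real" where
  "uniform_dist A i = (if i \<in> A then 1 / real (card A) else 0)"

lemma sum_uniform_dist:
  assumes "A \<subseteq> {..<n}"
  shows "(\<Sum>i<n. uniform_dist A i) = (if A = {} then 0 else 1)"
proof -
  have "finite A" using assms finite_subset by blast
  moreover have "(\<Sum>i<n. uniform_dist A i) = (\<Sum>i\<in>A. 1 / real (card A))"
    unfolding uniform_dist_def using assms by (simp add: sum.If_cases Int_absorb1)
  ultimately show ?thesis by simp
qed

lemma prob_family_uniform_dist:
  assumes "\<And>x. x \<in> S \<Longrightarrow> A x \<subseteq> {..<n} \<and> A x \<noteq> {}"
  shows "prob_family n S (\<lambda>x. uniform_dist (A x))"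
  using assms sum_uniform_dist unfolding prob_family_def by (auto simp: uniform_dist_def)

lemma pair_cost_le_inverse:
  assumes "i < n" "x i \<noteq> y i" "0 < p x i * p y i"
  shows "pair_cost n p x y \<le> ereal (1 / sqrt (p x i * p y i))"
proof -
  let ?M = "Max ((\<lambda>i. sqrt (p x i * p y i)) ` {i. i < n \<and> x i \<noteq> y i})"
  have le: "sqrt (p x i * p y i) \<le> ?M"
    using assms(1,2) by (intro Max_ge) auto
  moreover have pos: "0 < sqrt (p x i * p y i)" using assms(3) by simp
  ultimately have "0 < ?M" by linarith
  moreover have "1 / ?M \<le> 1 / sqrt (p x i * p y i)"
    using le pos \<open>0 < ?M\<close> by (intro divide_left_mono) simp_all
  ultimately show ?thesis unfolding pair_cost_def Let_def by simp
qed

lemma pair_cost_uniform_dist_le: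
  assumes "i < n" "x i \<noteq> y i" "i \<in> A x" "i \<in> A y" "finite (A x)" "finite (A y)"
  shows "pair_cost n (\<lambda>x. uniform_dist (A x)) x y \<le> ereal (sqrt (real (card (A x) * card (A y))))"
proof -
  have "card (A x) > 0" "card (A y) > 0"
    using assms(3-6) card_gt_0_iff by blast+
  then show ?thesis
    using pair_cost_le_inverse[where p = "\<lambda>x. uniform_dist (A x)" and x = x and y = y, OF assms(1,2)] assms(3,4)
    by (simp add: uniform_dist_def real_sqrt_divide real_sqrt_mult)
qed

lemma maxPI_le_uniform_dist:
  assumes "\<And>x. x \<in> S \<Longrightarrow> A x \<subseteq> {..<n} \<and> A x \<noteq> {}"
    and "\<And>x y. x \<in> S \<Longrightarrow> y \<in> S \<Longrightarrow> f x \<noteq> f y \<Longrightarrow>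
           (\<exists>i\<in>A x \<inter> A y. x i \<noteq> y i) \<and> real (card (A x) * card (A y)) \<le> B"
  shows "maxPI n S f \<le> ereal (sqrt B)"
proof -
  have "pair_cost n (\<lambda>x. uniform_dist (A x)) x y \<le> ereal (sqrt B)"
    if xy: "x \<in> S" "y \<in> S" "f x \<noteq> f y" for x y
  proof -
    obtain i where "i \<in> A x" "i \<in> A y" "x i \<noteq> y i"
      using assms(2)[OF xy] by blast
    moreover have "A x \<subseteq> {..<n}" "A y \<subseteq> {..<n}"
      using assms(1) xy by auto
    ultimately have "pair_cost n (\<lambda>x. uniform_dist (A x)) x y
        \<le> ereal (sqrt (real (card (A x) * card (A y))))"
      by (intro pair_cost_uniform_dist_le) (auto intro: finite_subset)
    also have "\<dots> \<le> ereal (sqrt B)"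
      using assms(2)[OF xy] by simp
    finally show ?thesis .
  qed
  then show ?thesis
    unfolding maxPI_def using prob_family_uniform_dist[OF assms(1)]
    by (intro INF_lower2[of "\<lambda>x. uniform_dist (A x)"]) (auto intro!: SUP_least)
qed

lemma maxPI_le_sqrt_Ccert_mult:
  assumes "0 < n"
  shows "maxPI n (cube n) f \<le> ereal (sqrt (real (Ccert n (cube n) f False) * real (Ccert n (cube n) f True)))"
proof -
  let ?A = "cert_support n (cube n) f"
  have key: "(\<exists>i\<in>?A x \<inter> ?A y. x i \<noteq> y i)
      \<and> real (card (?A x) * card (?A y)) \<le> real (Ccert n (cube n) f False) * real (Ccert n (cube n) f True)"
    if xy: "x \<in> cube n" "y \<in> cube n" "f x \<noteq> f y" for x y
  proof
    have Ax: "?A x = min_certificate n (cube n) f x"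
      and Ay: "?A y = min_certificate n (cube n) f y"
      using cert_support_eq_min_certificate[OF order_refl] xy by auto
    show "\<exists>i\<in>?A x \<inter> ?A y. x i \<noteq> y i"
      unfolding Ax Ay using certificates_intersect[OF xy
          min_certificate(1)[OF order_refl xy(1)] min_certificate(1)[OF order_refl xy(2)]] .
    have "f y \<noteq> f x" using xy(3) by simp
    have "card (?A x) \<le> Ccert n (cube n) f (f x)" "card (?A y) \<le> Ccert n (cube n) f (f y)"
      using card_cert_support_le_Ccert[OF order_refl xy(1,2) \<open>f y \<noteq> f x\<close>]
        card_cert_support_le_Ccert[OF order_refl xy(2,1) xy(3)] .
    then have "real (card (?A x) * card (?A y))
        \<le> real (Ccert n (cube n) f (f x)) * real (Ccert n (cube n) f (f y))"
      by (simp add: mult_mono)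
    with xy(3) show "real (card (?A x) * card (?A y))
        \<le> real (Ccert n (cube n) f False) * real (Ccert n (cube n) f True)"
      by (cases "f x") (auto simp: mult.commute)
  qed
  show ?thesis
  proof (rule maxPI_le_uniform_dist[OF _ key])
    fix x assume "x \<in> cube n"
    then show "?A x \<subseteq> {..<n} \<and> ?A x \<noteq> {}"
      using cert_support_subset[OF assms order_refl] by simp
  qed
qed

lemma maxPI_le_sqrt_mult_Ccert:
  assumes "0 < n" "S \<subseteq> cube n"
  shows "maxPI n S f \<le> ereal (sqrt (real n * real (Ccert n S f b)))"
proof -
  define A where "A x = (if f x = b then cert_support n S f x else {..<n})" for x
  have one_sided: "(\<exists>i\<in>A x \<inter> A y. x i \<noteq> y i) \<and> real (card (A x) * card (A y)) \<le> real n * real (Ccert n S f b)"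
    if xy: "x \<in> S" "y \<in> S" "f x = b" "f y \<noteq> b" for x y
  proof
    have "f y \<noteq> f x" using xy(3,4) by simp
    then have "A x = min_certificate n S f x"
      using cert_support_eq_min_certificate[OF assms(2) xy(1,2)] xy(3) unfolding A_def by simp
    then obtain i where "i \<in> A x" "x i \<noteq> y i"
      using certificate_distinguishes[OF min_certificate(1)[OF assms(2) xy(1)] xy(2) \<open>f y \<noteq> f x\<close>]
      by auto
    moreover have "i < n"
      using \<open>i \<in> A x\<close> cert_support_subset[OF assms xy(1)] xy(3) unfolding A_def by auto
    ultimately show "\<exists>i\<in>A x \<inter> A y. x i \<noteq> y i"
      using xy(4) unfolding A_def by auto
    have "card (A x) \<le> Ccert n S f b"
      using card_cert_support_le_Ccert[OF assms(2) xy(1,2) \<open>f y \<noteq> f x\<close>] xy(3)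
      unfolding A_def by simp
    then show "real (card (A x) * card (A y)) \<le> real n * real (Ccert n S f b)"
      using xy(4) unfolding A_def by (simp add: mult.commute mult_left_mono)
  qed
  have key: "(\<exists>i\<in>A x \<inter> A y. x i \<noteq> y i) \<and> real (card (A x) * card (A y)) \<le> real n * real (Ccert n S f b)"
    if xy: "x \<in> S" "y \<in> S" "f x \<noteq> f y" for x y
  proof (cases "f x = b")
    case True
    with xy show ?thesis by (intro one_sided) auto
  next
    case False
    with xy have "(\<exists>i\<in>A y \<inter> A x. y i \<noteq> x i) \<and> real (card (A y) * card (A x)) \<le> real n * real (Ccert n S f b)"
      by (intro one_sided) auto
    then show ?thesis by (auto simp: mult.commute)
  qed
  show ?thesis
  proof (rule maxPI_le_uniform_dist[OF _ key])
    fix x assume "x \<in> S"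
    then show "A x \<subseteq> {..<n} \<and> A x \<noteq> {}"
      using cert_support_subset[OF assms] assms(1) by (auto simp: A_def)
  qed
qed

theorem mainTheorem12:
  fixes n :: nat and S :: "(nat \<Rightarrow> bool) set" and f :: "(nat \<Rightarrow> bool) \<Rightarrow> bool"
  assumes "0 < n"
    and "S \<subseteq> cube n"
  shows "(S = cube n \<longrightarrow>
            maxPI n S f \<le> ereal (sqrt (real (Ccert n S f False) * real (Ccert n S f True))))
       \<and> maxPI n S f \<le> ereal (min (sqrt (real n * real (Ccert n S f False)))
                                  (sqrt (real n * real (Ccert n S f True))))"
  using maxPI_le_sqrt_Ccert_mult[OF assms(1)]
    maxPI_le_sqrt_mult_Ccert[OF assms, of f False] maxPI_le_sqrt_mult_Ccert[OF assms, of f True]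
  by (auto simp: min_def)

end
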